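(* Fix $1\leq p\leq\infty$ with $p\neq 2$ and set $c_p:=2/p-1$. Then $\|c_p\varepsilon\overline{z}+1+\varepsilon z\|_p<\|1+\varepsilon z\|_p$ for every sufficiently small $\varepsilon>0$, where $\|\cdot\|_p$ is the norm of $L^p(\mathbb{T})$.
   Context: $\mathbb{T}$ is the unit circle with normalized arc-length measure, and $z$ denotes the variable on $\mathbb{T}$. *)

theory Defs
  imports "HOL-Probability.Probability"
begin

text \<open>Norm of L^p(T), T the unit circle with normalized arc-length measure,
  parametrised by t in [0, 2 pi] via z = cis t.\<close>

definition Lp_T :: "ereal \<Rightarrow> (complex \<Rightarrow> complex) \<Rightarrow> real" where
  "Lp_T p f =
     (if p = \<infinity> then
        real_of_ereal (esssup (lebesgue_on {0..2*pi}) (\<lambda>t. ereal (cmod (f (cis t)))))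
      else
        ((1 / (2*pi)) * integral {0..2*pi} (\<lambda>t. cmod (f (cis t)) powr real_of_ereal p))
          powr (1 / real_of_ereal p))"

definition c_p :: "ereal \<Rightarrow> real" where
  "c_p p = (if p = \<infinity> then -1 else 2 / real_of_ereal p - 1)"

end

theory Submission
  imports Defs "HOL-Library.Landau_Symbols"
begin

text \<open>
  Write z = cis t and a = p/2. Then |c e conj z + 1 + e z|^2 = 1 + e v(t) + e^2 w(t) with
  v = 2(1+c) cos t and w = (1+c)^2 cos^2 t + (1-c)^2 sin^2 t, and expanding (1+u)^a to second
  order (uniformly in t) shows that the integral of |c e conj z + 1 + e z|^p over 0 \<le> t \<le> 2 pi equals
  2 pi + pi a e^2 ((1+c)^2 + (1-c)^2 + 2(a-1)(1+c)^2) + O(e^3).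
  The quadratic in c is minimal exactly at c = 1/a - 1 = c_p, where it is smaller than at c = 0
  by 2(a-1)^2/a > 0 for p \<noteq> 2; the O(e^3) remainder cannot compensate for small e.
  For p = \<infinity> we have c_p = -1 and |1 - e conj z + e z|^2 = 1 + 4 e^2 sin^2 t \<le> 1 + 4 e^2,
  whereas |1 + e z|^2 \<ge> 1 + e + e^2 on the arc 0 \<le> t \<le> pi/3 of positive measure.
\<close>

lemma one_plus_powr_taylor2:
  fixes a :: real
  obtains K where "0 \<le> K"
    "\<And>u. \<bar>u\<bar> \<le> 1/2 \<Longrightarrow> \<bar>(1 + u) powr a - (1 + a*u + a*(a-1)/2 * u\<^sup>2)\<bar> \<le> K * \<bar>u\<bar>^3"
proof
  define D where "D m x = (\<Prod>j<m. a - real j) * (1 + x) powr (a - real m)" for m and x :: real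
  show "0 \<le> \<bar>a*(a-1)*(a-2)\<bar> / 6 * 2 powr \<bar>a-3\<bar>" by simp
  fix u :: real
  assume u: "\<bar>u\<bar> \<le> 1/2"
  have "DERIV (D m) t :> D (Suc m) t" if "\<bar>t\<bar> \<le> \<bar>u\<bar>" for m t
  proof -
    have "1 + t > 0" using that u by auto
    then have "((\<lambda>x. (1 + x) powr (a - real m)) has_real_derivative
        (a - real m) * (1 + t) powr (a - real m - 1)) (at t)"
      by (auto intro!: derivative_eq_intros)
    then show ?thesis
      unfolding D_def by (auto dest: DERIV_cmult[where c="\<Prod>j<m. a - real j"] simp: algebra_simps)
  qed
  then obtain t where t: "\<bar>t\<bar> \<le> \<bar>u\<bar>"
    and eq: "D 0 u = (\<Sum>m<3. D m 0 / fact m * u ^ m) + D 3 t / fact 3 * u ^ 3"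
    using Maclaurin_bi_le[of D "D 0" 3 u] by blast
  have powr_bound: "(1 + t) powr (a - 3) \<le> 2 powr \<bar>a - 3\<bar>"
  proof (cases "a - 3 \<ge> 0")
    case True
    then show ?thesis using t u by (auto intro!: powr_mono2)
  next
    case False
    have "(1 + t) powr (a - 3) \<le> (1/2) powr (a - 3)" using False t u by (intro powr_mono2') auto
    also have "\<dots> = 2 powr \<bar>a - 3\<bar>" using False by (simp add: powr_divide flip: powr_minus_divide)
    finally show ?thesis .
  qed
  have "(\<Sum>m<3. D m 0 / fact m * u ^ m) = 1 + a*u + a*(a-1)/2 * u\<^sup>2"
    by (simp add: D_def eval_nat_numeral fact_numeral lessThan_Suc algebra_simps)
  with eq have "\<bar>(1 + u) powr a - (1 + a*u + a*(a-1)/2 * u\<^sup>2)\<bar> = \<bar>D 3 t / 6 * u^3\<bar>"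
    by (simp add: D_def fact_numeral)
  also have "\<dots> = \<bar>a*(a-1)*(a-2) * (1 + t) powr (a - 3) * u^3\<bar> / 6"
    by (simp add: D_def eval_nat_numeral lessThan_Suc algebra_simps)
  also have "\<dots> = \<bar>a*(a-1)*(a-2)\<bar> / 6 * (1 + t) powr (a - 3) * \<bar>u\<bar>^3"
    by (simp add: abs_mult power_abs)
  also have "\<dots> \<le> \<bar>a*(a-1)*(a-2)\<bar> / 6 * 2 powr \<bar>a-3\<bar> * \<bar>u\<bar>^3"
    using powr_bound by (intro mult_right_mono mult_left_mono) auto
  finally show "\<bar>(1 + u) powr a - (1 + a*u + a*(a-1)/2 * u\<^sup>2)\<bar>
      \<le> \<bar>a*(a-1)*(a-2)\<bar> / 6 * 2 powr \<bar>a-3\<bar> * \<bar>u\<bar>^3" .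
qed

lemma one_plus_powr_expansion:
  fixes a M :: real
  obtains C where
    "\<forall>\<^sub>F e in at_right 0. \<forall>x y. \<bar>x\<bar> \<le> M \<longrightarrow> \<bar>y\<bar> \<le> M \<longrightarrow>
       1/2 \<le> 1 + e*x + e\<^sup>2*y \<and>
       \<bar>(1 + e*x + e\<^sup>2*y) powr a - (1 + a*(e*x + e\<^sup>2*y) + a*(a-1)/2 * e\<^sup>2 * x\<^sup>2)\<bar> \<le> C * e^3"
proof -
  obtain K where "0 \<le> K"
    and K: "\<And>u. \<bar>u\<bar> \<le> 1/2 \<Longrightarrow> \<bar>(1 + u) powr a - (1 + a*u + a*(a-1)/2 * u\<^sup>2)\<bar> \<le> K * \<bar>u\<bar>^3"
    using one_plus_powr_taylor2[of a] by blast
  define B where "B = \<bar>M\<bar>"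
  define C where "C = 8*K*B^3 + 3/2*\<bar>a*(a-1)\<bar>*B\<^sup>2"
  have "\<forall>x y. \<bar>x\<bar> \<le> M \<longrightarrow> \<bar>y\<bar> \<le> M \<longrightarrow> 1/2 \<le> 1 + e*x + e\<^sup>2*y \<and>
      \<bar>(1 + e*x + e\<^sup>2*y) powr a - (1 + a*(e*x + e\<^sup>2*y) + a*(a-1)/2 * e\<^sup>2 * x\<^sup>2)\<bar>
        \<le> C * e^3"
    if e: "0 < e" "e < 1/(4*B+1)" for e
  proof (intro allI impI conjI)
    fix x y assume "\<bar>x\<bar> \<le> M" "\<bar>y\<bar> \<le> M"
    then have x: "\<bar>x\<bar> \<le> B" and y: "\<bar>y\<bar> \<le> B" by (auto simp: B_def)
    define u where "u = e*x + e\<^sup>2*y"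
    have "4*B*e + e < 1" using e by (simp add: B_def field_simps)
    moreover have "0 \<le> 4*B*e" using e by (simp add: B_def)
    ultimately have "e \<le> 1" and eB: "4*B*e \<le> 1" using e by linarith+
    have "\<bar>u\<bar> \<le> e*B + e\<^sup>2*B"
      unfolding u_def using e x y
      by (intro order.trans[OF abs_triangle_ineq] add_mono) (auto simp: abs_mult mult_left_mono)
    also have "\<dots> \<le> 2*B*e"
    proof -
      have "e\<^sup>2 \<le> e" using e \<open>e \<le> 1\<close> by (simp add: power2_eq_square mult_left_le)
      from mult_right_mono[OF this, of B] show ?thesis by (simp add: B_def)
    qed
    finally have u: "\<bar>u\<bar> \<le> 2*B*e" .
    with eB have "\<bar>u\<bar> \<le> 1/2" by linarith
    then show "1/2 \<le> 1 + e*x + e\<^sup>2*y" unfolding u_def by linarith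
    have "\<bar>(1 + u) powr a - (1 + a*u + a*(a-1)/2 * u\<^sup>2)\<bar> \<le> K * (2*B*e)^3"
      using K[OF \<open>\<bar>u\<bar> \<le> 1/2\<close>] u \<open>0 \<le> K\<close>
      by (meson abs_ge_zero mult_left_mono order.trans power_mono)
    moreover have "\<bar>u\<^sup>2 - e\<^sup>2*x\<^sup>2\<bar> \<le> 3*B\<^sup>2 * e^3"
    proof -
      have "u\<^sup>2 - e\<^sup>2*x\<^sup>2 = e^3 * (y * (2*x + e*y))"
        by (simp add: u_def power2_eq_square power3_eq_cube algebra_simps)
      then have "\<bar>u\<^sup>2 - e\<^sup>2*x\<^sup>2\<bar> = e^3 * \<bar>y * (2*x + e*y)\<bar>"
        using e by (simp add: abs_mult)
      also have "\<bar>y * (2*x + e*y)\<bar> \<le> B * (2*B + B)"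
        using x y \<open>e \<le> 1\<close> e unfolding abs_mult
        by (intro mult_mono order.trans[OF abs_triangle_ineq] add_mono)
           (auto simp: abs_mult mult_le_one intro: mult_le_one order.trans[OF mult_left_le_one_le])
      finally show ?thesis using e by (simp add: power2_eq_square mult_left_mono algebra_simps)
    qed
    ultimately have "\<bar>((1 + u) powr a - (1 + a*u + a*(a-1)/2 * u\<^sup>2)) + a*(a-1)/2 * (u\<^sup>2 - e\<^sup>2*x\<^sup>2)\<bar>
        \<le> K * (2*B*e)^3 + \<bar>a*(a-1)/2\<bar> * (3*B\<^sup>2 * e^3)"
      by (intro order.trans[OF abs_triangle_ineq] add_mono) (auto simp: abs_mult mult_left_mono)
    also have "\<dots> = C * e^3"
      by (simp add: C_def abs_mult power_mult_distrib algebra_simps)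
    finally show "\<bar>(1 + e*x + e\<^sup>2*y) powr a - (1 + a*(e*x + e\<^sup>2*y) + a*(a-1)/2 * e\<^sup>2 * x\<^sup>2)\<bar>
        \<le> C * e^3"
      by (simp add: u_def algebra_simps)
  qed
  moreover have "0 < 1/(4*B+1)" by (simp add: B_def add_nonneg_pos)
  ultimately have "\<forall>\<^sub>F e in at_right 0. \<forall>x y. \<bar>x\<bar> \<le> M \<longrightarrow> \<bar>y\<bar> \<le> M \<longrightarrow>
       1/2 \<le> 1 + e*x + e\<^sup>2*y \<and>
       \<bar>(1 + e*x + e\<^sup>2*y) powr a - (1 + a*(e*x + e\<^sup>2*y) + a*(a-1)/2 * e\<^sup>2 * x\<^sup>2)\<bar>
         \<le> C * e^3"
    unfolding eventually_at_right_field by blast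
  then show ?thesis using that by blast
qed

lemma integral_one_plus_powr_expansion:
  fixes v w :: "real \<Rightarrow> real" and a l h :: real
  assumes "l \<le> h" and v: "continuous_on {l..h} v" and w: "continuous_on {l..h} w"
  shows "(\<lambda>e. integral {l..h} (\<lambda>t. (1 + e * v t + e\<^sup>2 * w t) powr a)
            - integral {l..h} (\<lambda>t. 1 + a * (e * v t + e\<^sup>2 * w t) + a*(a-1)/2 * e\<^sup>2 * (v t)\<^sup>2))
         \<in> O[at_right 0](\<lambda>e. e^3)"
proof -
  obtain Mv Mw where "\<forall>t\<in>{l..h}. norm (v t) \<le> Mv" "\<forall>t\<in>{l..h}. norm (w t) \<le> Mw"
    using compact_imp_bounded[OF compact_continuous_image[OF v compact_Icc]]
      compact_imp_bounded[OF compact_continuous_image[OF w compact_Icc]]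
    by (auto simp: bounded_iff)
  then have bounds: "\<forall>t\<in>{l..h}. \<bar>v t\<bar> \<le> max Mv Mw \<and> \<bar>w t\<bar> \<le> max Mv Mw"
    by fastforce
  obtain C where C: "\<forall>\<^sub>F e in at_right 0. \<forall>x y. \<bar>x\<bar> \<le> max Mv Mw \<longrightarrow> \<bar>y\<bar> \<le> max Mv Mw \<longrightarrow>
       1/2 \<le> 1 + e*x + e\<^sup>2*y \<and>
       \<bar>(1 + e*x + e\<^sup>2*y) powr a - (1 + a*(e*x + e\<^sup>2*y) + a*(a-1)/2 * e\<^sup>2 * x\<^sup>2)\<bar> \<le> C * e^3"
    by (rule one_plus_powr_expansion)
  have "\<forall>\<^sub>F e in at_right 0.
      norm (integral {l..h} (\<lambda>t. (1 + e * v t + e\<^sup>2 * w t) powr a)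
            - integral {l..h} (\<lambda>t. 1 + a * (e * v t + e\<^sup>2 * w t) + a*(a-1)/2 * e\<^sup>2 * (v t)\<^sup>2))
      \<le> C * (h - l) * norm (e^3)"
    using C eventually_at_right_less[of 0]
  proof eventually_elim
    case (elim e)
    have base: "1/2 \<le> 1 + e * v t + e\<^sup>2 * w t" if "t \<in> {l..h}" for t
      using elim(1) bounds that by blast
    let ?f = "\<lambda>t. (1 + e * v t + e\<^sup>2 * w t) powr a"
    let ?g = "\<lambda>t. 1 + a * (e * v t + e\<^sup>2 * w t) + a*(a-1)/2 * e\<^sup>2 * (v t)\<^sup>2"
    have f: "continuous_on {l..h} ?f"
      using base by (intro continuous_intros v w) force
    have g: "continuous_on {l..h} ?g"
      by (intro continuous_intros v w)
    have "integral {l..h} ?f - integral {l..h} ?g = integral {l..h} (\<lambda>t. ?f t - ?g t)"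
      using f g by (intro integral_diff[symmetric] integrable_continuous_interval)
    also have "norm \<dots> \<le> C * e^3 * (h - l)"
      using \<open>l \<le> h\<close> f g elim(1) bounds by (intro integral_bound continuous_on_diff) auto
    finally have "norm (integral {l..h} ?f - integral {l..h} ?g) \<le> C * e^3 * (h - l)" .
    then show ?case using elim(2) by (simp add: algebra_simps)
  qed
  then show ?thesis by (rule bigoI)
qed

lemma has_integral_trig_quadratic:
  fixes \<alpha> \<beta> \<gamma> \<delta> :: real
  shows "((\<lambda>t. \<alpha> + \<beta> * cos t + \<gamma> * (cos t)\<^sup>2 + \<delta> * (sin t)\<^sup>2) has_integral 2*pi*\<alpha> + pi*(\<gamma> + \<delta>))
           {0..2*pi}"
proof -
  define F where "F t = \<alpha>*t + \<beta> * sin t + \<gamma> * (t/2 + sin t * cos t / 2) + \<delta> * (t/2 - sin t * cos t / 2)"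
    for t :: real
  have "(F has_real_derivative \<alpha> + \<beta> * cos t + \<gamma> * (cos t)\<^sup>2 + \<delta> * (sin t)\<^sup>2) (at t)" for t
  proof -
    have "1/2 + (cos t * cos t - sin t * sin t)/2 = (cos t)\<^sup>2"
      and "1/2 - (cos t * cos t - sin t * sin t)/2 = (sin t)\<^sup>2"
      using sin_cos_squared_add[of t] by (simp_all add: power2_eq_square field_simps)
    moreover have "(F has_real_derivative
        \<alpha> + \<beta> * cos t + \<gamma> * (1/2 + (cos t * cos t - sin t * sin t)/2)
          + \<delta> * (1/2 - (cos t * cos t - sin t * sin t)/2)) (at t)"
      unfolding F_def by (auto intro!: derivative_eq_intros simp: field_simps)
    ultimately show ?thesis by simp
  qed
  then have "((\<lambda>t. \<alpha> + \<beta> * cos t + \<gamma> * (cos t)\<^sup>2 + \<delta> * (sin t)\<^sup>2) has_integral F (2*pi) - F 0) {0..2*pi}"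
    by (intro fundamental_theorem_of_calculus)
       (auto simp: has_real_derivative_iff_has_vector_derivative[symmetric] intro: has_field_derivative_at_within)
  then show ?thesis by (simp add: F_def algebra_simps)
qed

lemma cmod_conj_perturbation_cis_squared:
  fixes c e t :: real
  shows "(cmod (complex_of_real (c*e) * cnj (cis t) + 1 + complex_of_real e * cis t))\<^sup>2
       = 1 + e * (2*(1+c) * cos t) + e\<^sup>2 * ((1+c)\<^sup>2 * (cos t)\<^sup>2 + (1-c)\<^sup>2 * (sin t)\<^sup>2)"
  unfolding cmod_power2 by (simp add: power2_eq_square algebra_simps)

text \<open>2 pi times the r-th power of the L^r(T) norm of c e conj z + 1 + e z.\<close>

definition circle_moment :: "real \<Rightarrow> real \<Rightarrow> real \<Rightarrow> real" where
  "circle_moment r c e =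
     integral {0..2*pi} (\<lambda>t. cmod (complex_of_real (c*e) * cnj (cis t) + 1 + complex_of_real e * cis t) powr r)"

lemma circle_moment_expansion:
  fixes r c :: real
  shows "(\<lambda>e. circle_moment r c e - (2*pi + pi*r/2 * ((1+c)\<^sup>2 + (1-c)\<^sup>2 + (r-2)*(1+c)\<^sup>2) * e\<^sup>2))
           \<in> O[at_right 0](\<lambda>e. e^3)"
proof -
  define a where "a = r/2"
  then have r_eq: "r = 2*a" by simp
  define v where "v t = 2*(1+c) * cos t" for t
  define w where "w t = (1+c)\<^sup>2 * (cos t)\<^sup>2 + (1-c)\<^sup>2 * (sin t)\<^sup>2" for t
  have moment: "circle_moment r c e = integral {0..2*pi} (\<lambda>t. (1 + e * v t + e\<^sup>2 * w t) powr a)" for e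
  proof -
    have powr_square: "cmod z powr r = ((cmod z)\<^sup>2) powr a" for z
      by (simp add: a_def powr_powr flip: powr_numeral)
    show ?thesis
      unfolding circle_moment_def v_def w_def
      by (simp only: powr_square cmod_conj_perturbation_cis_squared)
  qed
  have poly_integral: "integral {0..2*pi} (\<lambda>t. 1 + a * (e * v t + e\<^sup>2 * w t) + a*(a-1)/2 * e\<^sup>2 * (v t)\<^sup>2)
      = 2*pi + pi*r/2 * ((1+c)\<^sup>2 + (1-c)\<^sup>2 + (r-2)*(1+c)\<^sup>2) * e\<^sup>2" for e
  proof -
    have integrand: "(\<lambda>t. 1 + a * (e * v t + e\<^sup>2 * w t) + a*(a-1)/2 * e\<^sup>2 * (v t)\<^sup>2)
        = (\<lambda>t. 1 + (2*a*e*(1+c)) * cos t + (a*e\<^sup>2*(1+c)\<^sup>2 + 2*a*(a-1)*e\<^sup>2*(1+c)\<^sup>2) * (cos t)\<^sup>2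
              + (a*e\<^sup>2*(1-c)\<^sup>2) * (sin t)\<^sup>2)"
      unfolding v_def w_def by (rule ext) algebra
    have coefficients: "2*pi*1 + pi*((a*e\<^sup>2*(1+c)\<^sup>2 + 2*a*(a-1)*e\<^sup>2*(1+c)\<^sup>2) + a*e\<^sup>2*(1-c)\<^sup>2)
        = 2*pi + pi*r/2 * ((1+c)\<^sup>2 + (1-c)\<^sup>2 + (r-2)*(1+c)\<^sup>2) * e\<^sup>2"
      using r_eq by (simp add: power2_eq_square field_simps)
    show ?thesis
      unfolding integrand coefficients[symmetric] by (rule integral_unique[OF has_integral_trig_quadratic])
  qed
  have "(\<lambda>e. circle_moment r c e - (2*pi + pi*r/2 * ((1+c)\<^sup>2 + (1-c)\<^sup>2 + (r-2)*(1+c)\<^sup>2) * e\<^sup>2))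
      = (\<lambda>e. integral {0..2*pi} (\<lambda>t. (1 + e * v t + e\<^sup>2 * w t) powr a)
           - integral {0..2*pi} (\<lambda>t. 1 + a * (e * v t + e\<^sup>2 * w t) + a*(a-1)/2 * e\<^sup>2 * (v t)\<^sup>2))"
    by (simp only: moment poly_integral)
  also have "\<dots> \<in> O[at_right 0](\<lambda>e. e^3)"
    by (rule integral_one_plus_powr_expansion) (auto simp: v_def w_def intro!: continuous_intros)
  finally show ?thesis .
qed

lemma eventually_neg_at_right_0:
  fixes f :: "real \<Rightarrow> real" and k :: real
  assumes "(\<lambda>e. f e + k * e\<^sup>2) \<in> O[at_right 0](\<lambda>e. e^3)" and "0 < k"
  shows "\<forall>\<^sub>F e in at_right 0. f e < 0"
proof -
  have "(\<lambda>e::real. e^3) \<in> o[at_right 0](\<lambda>e. e\<^sup>2)"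
  proof (rule landau_o.smallI)
    fix c :: real
    assume "0 < c"
    then have "\<forall>\<^sub>F e in at_right (0::real). e < c"
      unfolding eventually_at_right_field by (intro exI[of _ c]) auto
    with eventually_at_right_less[of 0]
    show "\<forall>\<^sub>F e in at_right (0::real). norm (e^3) \<le> c * norm (e\<^sup>2)"
    proof eventually_elim
      case (elim e)
      then have "e * e\<^sup>2 \<le> c * e\<^sup>2" by (intro mult_right_mono) auto
      with elim show ?case by (simp add: power3_eq_cube power2_eq_square)
    qed
  qed
  with assms(1) have "(\<lambda>e. f e + k * e\<^sup>2) \<in> o[at_right 0](\<lambda>e. e\<^sup>2)"
    by (rule landau_o.big_small_trans)
  then have "\<forall>\<^sub>F e in at_right 0. norm (f e + k * e\<^sup>2) \<le> k/2 * norm (e\<^sup>2)"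
    by (rule landau_o.smallD) (use assms(2) in simp)
  with eventually_at_right_less[of 0] show ?thesis
  proof eventually_elim
    case (elim e)
    then have "\<bar>f e + k * e\<^sup>2\<bar> \<le> k/2 * e\<^sup>2" by simp
    then have "f e + k * e\<^sup>2 \<le> k/2 * e\<^sup>2" by (rule abs_le_D1)
    moreover have "0 < k * e\<^sup>2" using elim(1) assms(2) by simp
    ultimately show ?case by linarith
  qed
qed

lemma circle_moment_minimizer_less:
  fixes r :: real
  assumes "r \<noteq> 0" and "r \<noteq> 2"
  shows "\<forall>\<^sub>F e in at_right 0. circle_moment r (2/r - 1) e < circle_moment r 0 e"
proof -
  define main where "main c e = 2*pi + pi*r/2 * ((1+c)\<^sup>2 + (1-c)\<^sup>2 + (r-2)*(1+c)\<^sup>2) * e\<^sup>2"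
    for c e :: real
  have "main (2/r - 1) e - main 0 e = - (pi * (r-2)\<^sup>2 / 2) * e\<^sup>2" for e
    using assms(1) by (simp add: main_def power2_eq_square field_simps)
  then have "(\<lambda>e. (circle_moment r (2/r - 1) e - main (2/r - 1) e) - (circle_moment r 0 e - main 0 e))
      = (\<lambda>e. (circle_moment r (2/r - 1) e - circle_moment r 0 e) + pi * (r-2)\<^sup>2 / 2 * e\<^sup>2)"
    by (simp add: fun_eq_iff algebra_simps)
  moreover have "(\<lambda>e. (circle_moment r (2/r - 1) e - main (2/r - 1) e) - (circle_moment r 0 e - main 0 e))
      \<in> O[at_right 0](\<lambda>e. e^3)"
    unfolding main_def by (intro sum_in_bigo(2) circle_moment_expansion)
  ultimately have "(\<lambda>e. (circle_moment r (2/r - 1) e - circle_moment r 0 e) + pi * (r-2)\<^sup>2 / 2 * e\<^sup>2)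
      \<in> O[at_right 0](\<lambda>e. e^3)"
    by (simp only:)
  moreover have "0 < pi * (r-2)\<^sup>2 / 2" using assms(2) by simp
  ultimately have "\<forall>\<^sub>F e in at_right 0. circle_moment r (2/r - 1) e - circle_moment r 0 e < 0"
    by (rule eventually_neg_at_right_0)
  then show ?thesis by eventually_elim simp
qed

lemma circle_moment_nonneg: "0 \<le> circle_moment r c e"
  unfolding circle_moment_def
  by (cases "(\<lambda>t. cmod (complex_of_real (c*e) * cnj (cis t) + 1 + complex_of_real e * cis t) powr r)
               integrable_on {0..2*pi}")
     (simp_all add: integral_nonneg not_integrable_integral)

lemma less_esssup:
  assumes "S \<in> sets M" "emeasure M S \<noteq> 0" "\<And>x. x \<in> S \<Longrightarrow> c < f x"
  shows "c < esssup M f"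
proof (rule ccontr)
  assume "\<not> c < esssup M f"
  then have "f x \<le> esssup M f \<Longrightarrow> x \<notin> S" for x
    using assms(3) by (metis not_less order.trans)
  then have "AE x in M. x \<notin> S"
    using esssup_AE[of f M] by (auto elim: eventually_mono)
  moreover have "{x \<in> space M. \<not> x \<notin> S} = S"
    using sets.sets_into_space[OF assms(1)] by auto
  ultimately have "emeasure M S = 0"
    using AE_iff_measurable[OF assms(1)] by simp
  with assms(2) show False by blast
qed

lemma esssup_lebesgue_on_le:
  fixes g :: "real \<Rightarrow> real"
  assumes "continuous_on {l..h} g" and "\<And>t. t \<in> {l..h} \<Longrightarrow> g t \<le> B"
  shows "esssup (lebesgue_on {l..h}) (\<lambda>t. ereal (g t)) \<le> ereal B"
proof (rule esssup_I)
  show "(\<lambda>t. ereal (g t)) \<in> borel_measurable (lebesgue_on {l..h})"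
    using assms(1) by (intro borel_measurable_ereal continuous_imp_measurable_on_sets_lebesgue) auto
  show "AE t in lebesgue_on {l..h}. ereal (g t) \<le> ereal B"
    using assms(2) by (intro AE_I2) simp
qed

lemma Lp_T_infinity_conj_perturbation_le:
  fixes e :: real
  shows "Lp_T \<infinity> (\<lambda>z. - complex_of_real e * cnj z + 1 + complex_of_real e * z) \<le> sqrt (1 + 4*e\<^sup>2)"
proof -
  have "cmod (- complex_of_real e * cnj (cis t) + 1 + complex_of_real e * cis t) \<le> sqrt (1 + 4*e\<^sup>2)" for t
  proof (rule real_le_rsqrt)
    have "4*e\<^sup>2 * (sin t)\<^sup>2 \<le> 4*e\<^sup>2" by (intro mult_left_le) (simp_all add: abs_square_le_1)
    then show "(cmod (- complex_of_real e * cnj (cis t) + 1 + complex_of_real e * cis t))\<^sup>2 \<le> 1 + 4*e\<^sup>2"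
      using cmod_conj_perturbation_cis_squared[of "-1" e t] by simp
  qed
  then have "esssup (lebesgue_on {0..2*pi})
      (\<lambda>t. ereal (cmod (- complex_of_real e * cnj (cis t) + 1 + complex_of_real e * cis t)))
      \<le> ereal (sqrt (1 + 4*e\<^sup>2))"
    unfolding cis_conv_exp by (intro esssup_lebesgue_on_le continuous_intros) auto
  then show ?thesis
    unfolding Lp_T_def by (simp add: real_le_ereal_iff)
qed

lemma Lp_T_infinity_one_plus_gt:
  fixes e :: real
  assumes "0 < e" "e < 1/3"
  shows "sqrt (1 + 4*e\<^sup>2) < Lp_T \<infinity> (\<lambda>z. 1 + complex_of_real e * z)"
proof -
  define M where "M = lebesgue_on {0..2*pi}"
  have "ereal (sqrt (1 + 4*e\<^sup>2)) < esssup M (\<lambda>t. ereal (cmod (1 + complex_of_real e * cis t)))"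
  proof (rule less_esssup)
    have "{0..pi/3} \<subseteq> {0..2*pi}" by auto
    then show "{0..pi/3} \<in> sets M"
      unfolding M_def by (simp add: sets_restrict_space_iff)
    have "emeasure M {0..pi/3} = pi/3"
      unfolding M_def using \<open>{0..pi/3} \<subseteq> {0..2*pi}\<close> by (subst emeasure_restrict_space) auto
    then show "emeasure M {0..pi/3} \<noteq> 0" by simp
    fix t assume "t \<in> {0..pi/3}"
    then have "1/2 \<le> cos t"
      using cos_monotone_0_pi_le[of t "pi/3"] by (simp add: cos_60)
    have "1 + 4*e\<^sup>2 < 1 + 2*e * (1/2) + e\<^sup>2" using assms by (simp add: power2_eq_square)
    also have "\<dots> \<le> 1 + 2*e * cos t + e\<^sup>2" using \<open>1/2 \<le> cos t\<close> assms by simp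
    also have "\<dots> = (cmod (1 + complex_of_real e * cis t))\<^sup>2"
      using cmod_conj_perturbation_cis_squared[of 0 e t] sin_cos_squared_add[of t]
      by (simp add: algebra_simps)
    finally show "ereal (sqrt (1 + 4*e\<^sup>2)) < ereal (cmod (1 + complex_of_real e * cis t))"
      by (simp add: real_less_lsqrt)
  qed
  moreover have "esssup M (\<lambda>t. ereal (cmod (1 + complex_of_real e * cis t))) \<le> ereal (1 + e)"
  proof -
    have "cmod (1 + complex_of_real e * cis t) \<le> 1 + e" for t
      using norm_triangle_ineq[of 1 "complex_of_real e * cis t"] assms by (simp add: norm_mult)
    then show ?thesis
      unfolding M_def cis_conv_exp by (intro esssup_lebesgue_on_le continuous_intros) auto
  qed
  ultimately show ?thesis
    unfolding Lp_T_def M_def[symmetric] by (auto simp: ereal_less_real_iff)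
qed

lemma Lp_T_ereal_minimizer_less:
  fixes r :: real
  assumes "0 < r" and "r \<noteq> 2"
  shows "\<forall>\<^sub>F e in at_right 0.
           Lp_T (ereal r) (\<lambda>z. complex_of_real ((2/r - 1) * e) * cnj z + 1 + complex_of_real e * z)
             < Lp_T (ereal r) (\<lambda>z. 1 + complex_of_real e * z)"
proof -
  have "\<forall>\<^sub>F e in at_right 0. circle_moment r (2/r - 1) e < circle_moment r 0 e"
    using assms by (intro circle_moment_minimizer_less) auto
  then show ?thesis
  proof eventually_elim
    case (elim e)
    have "((1 / (2*pi)) * circle_moment r (2/r - 1) e) powr (1/r)
        < ((1 / (2*pi)) * circle_moment r 0 e) powr (1/r)"
      using elim assms(1)
      by (intro powr_less_mono2 mult_strict_left_mono mult_nonneg_nonneg circle_moment_nonneg) auto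
    then show ?case
      by (simp add: Lp_T_def circle_moment_def)
  qed
qed

theorem lemma2p1:
  fixes p :: ereal
  assumes "1 \<le> p" and "p \<noteq> 2"
  shows "\<forall>\<^sub>F \<epsilon> in at_right (0::real).
           Lp_T p (\<lambda>z. complex_of_real (c_p p * \<epsilon>) * cnj z + 1 + complex_of_real \<epsilon> * z)
             < Lp_T p (\<lambda>z. 1 + complex_of_real \<epsilon> * z)"
proof (cases "p = \<infinity>")
  case True
  have "\<forall>\<^sub>F \<epsilon> in at_right (0::real). \<epsilon> < 1/3"
    unfolding eventually_at_right_field by (intro exI[of _ "1/3"]) auto
  with eventually_at_right_less[of 0] show ?thesis
  proof eventually_elim
    case (elim \<epsilon>)
    with Lp_T_infinity_conj_perturbation_le[of \<epsilon>] Lp_T_infinity_one_plus_gt[of \<epsilon>]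
    show ?case using True by (simp add: c_p_def)
  qed
next
  case False
  with assms obtain r where "p = ereal r" "1 \<le> r" "r \<noteq> 2"
    by (cases p) auto
  then show ?thesis
    using Lp_T_ereal_minimizer_less[of r] by (simp add: c_p_def)
qed

end
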